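(* Let $d$ be a metric on $\mathbb R^n$ induced by a norm, let $w_1,\dots,w_N$ be contractions on $(\mathbb R^n,d)$, let $p_1,\dots,p_N\in(0,1]$ with $\sum_ip_i=1$, and let $\pi_\infty$ be the invariant measure of the hyperbolic IFS $\{\mathbb R^n;w_1,\dots,w_N;p_1,\dots,p_N\}$. For $\delta>0$, consider the DIFS $\{\mathcal D^n(\delta);\tilde w_1,\dots,\tilde w_N;p_1,\dots,p_N\}$ (with the same constant probabilities), where $\tilde w_i$ is the $\delta$-roundoff of $w_i$, and let $\Pi(\delta)$ be the family of stationary probability distributions of the associated Markov chain that are supported by positive recurrent communication classes of this chain. Then for every continuous bounded $f:\mathbb R^n\to\mathbb R$, $$\lim_{\delta\to0}\sum_{\tilde x\in\mathcal D^n(\delta)}f(\tilde x)\,\pi_k(\delta)\{\tilde x\}=\int_{\mathbb R^n}f\,d\pi_\infty,$$ where for each $\delta$, $\pi_k(\delta)$ is any element of $\Pi(\delta)$; that is, the $\pi_k(\delta)$ converge weakly to $\pi_\infty$ as $\delta\to0$.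
   Context: For $m\in\mathbb Z^n$, $C_\delta(m)=\prod_{j=1}^n[(m_j-\tfrac12)\delta,(m_j+\tfrac12)\delta)$; $\mathcal D^n(\delta)=\{\delta m:m\in\mathbb Z^n\}\subset\mathbb R^n$. The $\delta$-roundoff of $x\in\mathbb R^n$ is $\tilde x=\delta m$ where $x\in C_\delta(m)$; the $\delta$-roundoff of $w$ is $\tilde w(\tilde x)=\widetilde{w(\tilde x)}$ on $\mathcal D^n(\delta)$. The IFS invariant measure is the unique Borel probability measure $\pi_\infty$ on $\mathbb R^n$ with $\pi_\infty=\sum_ip_i\,\pi_\infty\circ w_i^{-1}$. A DIFS with constant probabilities here is the Markov chain on $\mathcal D^n(\delta)$ with transition probabilities $P(\tilde x,\tilde y)=\sum_ip_i\mathbf 1_{\{\tilde y\}}(\tilde w_i(\tilde x))$. Accessibility: $P^k(\tilde x,\tilde y)>0$ for some $k\ge1$; a communication class is a maximal nonempty set of mutually accessible states; a state is positive recurrent if the chain started there returns a.s. with finite expected return time; a positive recurrent communication class is a communication class of positive recurrent states. A stationary probability distribution $\pi$ satisfies $\pi(\tilde y)=\sum_{\tilde x}\pi(\tilde x)P(\tilde x,\tilde y)$; the chain restricted to a positive recurrent communication class has a unique stationary distribution, regarded as a measure on $\mathcal D^n(\delta)$ vanishing outside the class. *)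

theory Defs
  imports "HOL-Probability.Probability"
begin

definition is_norm :: "('a::real_vector \<Rightarrow> real) \<Rightarrow> bool" where
  "is_norm nrm \<longleftrightarrow> (\<forall>x. 0 \<le> nrm x) \<and> (\<forall>x. nrm x = 0 \<longleftrightarrow> x = 0)
     \<and> (\<forall>c x. nrm (c *\<^sub>R x) = \<bar>c\<bar> * nrm x)
     \<and> (\<forall>x y. nrm (x + y) \<le> nrm x + nrm y)"

text \<open>delta-roundoff: x lies in C_delta(m) iff m_j = floor(x_j/delta + 1/2) for all j.\<close>
definition roundoff :: "real \<Rightarrow> real^'n \<Rightarrow> real^'n" where
  "roundoff \<delta> x = (\<chi> j. \<delta> * of_int \<lfloor>x $ j / \<delta> + 1/2\<rfloor>)"

definition lattice :: "real \<Rightarrow> (real^'n) set" where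
  "lattice \<delta> = {x. \<forall>j. \<exists>m::int. x $ j = \<delta> * of_int m}"

definition trans_prob :: "nat \<Rightarrow> (nat \<Rightarrow> 'a \<Rightarrow> 'a) \<Rightarrow> (nat \<Rightarrow> real) \<Rightarrow> 'a \<Rightarrow> 'a \<Rightarrow> real" where
  "trans_prob N W p x y = (\<Sum>i<N. p i * (if W i x = y then 1 else 0))"

fun kstep :: "nat \<Rightarrow> (nat \<Rightarrow> 'a \<Rightarrow> 'a) \<Rightarrow> (nat \<Rightarrow> real) \<Rightarrow> nat \<Rightarrow> 'a \<Rightarrow> 'a \<Rightarrow> real" where
  "kstep N W p 0 x y = (if x = y then 1 else 0)"
| "kstep N W p (Suc k) x y = (\<Sum>i<N. p i * kstep N W p k (W i x) y)"

definition accessible :: "nat \<Rightarrow> (nat \<Rightarrow> 'a \<Rightarrow> 'a) \<Rightarrow> (nat \<Rightarrow> real) \<Rightarrow> 'a \<Rightarrow> 'a \<Rightarrow> bool" where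
  "accessible N W p x y \<longleftrightarrow> (\<exists>k\<ge>1. kstep N W p k x y > 0)"

text \<open>First-passage probabilities: first_pass k x y = probability that the chain started
  at x hits y for the first time (at a time \<ge> 1) exactly at time k.\<close>
fun first_pass :: "nat \<Rightarrow> (nat \<Rightarrow> 'a \<Rightarrow> 'a) \<Rightarrow> (nat \<Rightarrow> real) \<Rightarrow> nat \<Rightarrow> 'a \<Rightarrow> 'a \<Rightarrow> real" where
  "first_pass N W p 0 x y = 0"
| "first_pass N W p (Suc 0) x y = trans_prob N W p x y"
| "first_pass N W p (Suc (Suc k)) x y =
     (\<Sum>i<N. p i * (if W i x = y then 0 else first_pass N W p (Suc k) (W i x) y))"

definition pos_recurrent :: "nat \<Rightarrow> (nat \<Rightarrow> 'a \<Rightarrow> 'a) \<Rightarrow> (nat \<Rightarrow> real) \<Rightarrow> 'a \<Rightarrow> bool" where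
  "pos_recurrent N W p x \<longleftrightarrow>
     (\<lambda>k. first_pass N W p k x x) sums 1 \<and> summable (\<lambda>k. real k * first_pass N W p k x x)"

definition comm_class :: "'a set \<Rightarrow> nat \<Rightarrow> (nat \<Rightarrow> 'a \<Rightarrow> 'a) \<Rightarrow> (nat \<Rightarrow> real) \<Rightarrow> 'a set \<Rightarrow> bool" where
  "comm_class S N W p C \<longleftrightarrow> C \<subseteq> S \<and> C \<noteq> {} \<and>
     (\<forall>x\<in>C. \<forall>y\<in>C. accessible N W p x y) \<and>
     (\<forall>C'. C \<subseteq> C' \<and> C' \<subseteq> S \<and> (\<forall>x\<in>C'. \<forall>y\<in>C'. accessible N W p x y) \<longrightarrow> C' = C)"

definition pos_rec_class :: "'a set \<Rightarrow> nat \<Rightarrow> (nat \<Rightarrow> 'a \<Rightarrow> 'a) \<Rightarrow> (nat \<Rightarrow> real) \<Rightarrow> 'a set \<Rightarrow> bool" where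
  "pos_rec_class S N W p C \<longleftrightarrow> comm_class S N W p C \<and> (\<forall>x\<in>C. pos_recurrent N W p x)"

definition stationary_on :: "nat \<Rightarrow> (nat \<Rightarrow> 'a \<Rightarrow> 'a) \<Rightarrow> (nat \<Rightarrow> real) \<Rightarrow> 'a set \<Rightarrow> ('a \<Rightarrow> real) \<Rightarrow> bool" where
  "stationary_on N W p C \<pi> \<longleftrightarrow> (\<forall>x. 0 \<le> \<pi> x) \<and> (\<forall>x. x \<notin> C \<longrightarrow> \<pi> x = 0) \<and>
     (\<pi> has_sum 1) C \<and> (\<forall>y\<in>C. ((\<lambda>x. \<pi> x * trans_prob N W p x y) has_sum \<pi> y) C)"

definition Pi_family :: "'a set \<Rightarrow> nat \<Rightarrow> (nat \<Rightarrow> 'a \<Rightarrow> 'a) \<Rightarrow> (nat \<Rightarrow> real) \<Rightarrow> ('a \<Rightarrow> real) set" where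
  "Pi_family S N W p = {\<pi>. \<exists>C. pos_rec_class S N W p C \<and> stationary_on N W p C \<pi>}"

end

theory Submission
  imports Defs
begin

text \<open>
  The Markov operator \<open>T h x = (\<Sum>i<N. p i * h (w i x))\<close> of the IFS multiplies Lipschitz constants
  by the contraction factor \<open>s < 1\<close>, so for bounded Lipschitz \<open>g\<close> the iterates \<open>T\<^sup>k g\<close> become
  asymptotically constant; integrating against the invariant measure \<open>\<mu>\<close> shows that they converge
  pointwise to \<open>\<integral>g d\<mu>\<close>. A stationary distribution \<open>\<pi>\<close> of the rounded chain is invariant for the
  operator \<open>T\<^sub>\<delta>\<close> of the rounded maps, which move points by \<open>O(\<delta>)\<close>; comparing \<open>T\<^sub>\<delta>\<^sup>k g\<close> with
  \<open>T\<^sup>k g\<close> gives \<open>\<bar>\<integral>g d\<pi> - \<integral>g d\<mu>\<bar> \<le> L * O(\<delta>) / (1 - s)\<close>. Bounded continuous \<open>f\<close> are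
  handled by approximating \<open>f\<close> and \<open>-f\<close> from below by the Lipschitz inf-convolutions
  \<open>inf\<^sub>y f y + k * dist x y\<close>.
\<close>

section \<open>Norms on \<open>real^'n\<close> and roundoff\<close>

lemma is_norm_convex_on:
  fixes nrm :: "'a::real_vector \<Rightarrow> real"
  assumes "is_norm nrm"
  shows "convex_on UNIV nrm"
proof (rule convex_onI)
  fix t :: real and x y :: 'a
  assume t: "0 < t" "t < 1"
  have "nrm ((1 - t) *\<^sub>R x + t *\<^sub>R y) \<le> nrm ((1 - t) *\<^sub>R x) + nrm (t *\<^sub>R y)"
    using assms unfolding is_norm_def by blast
  also have "\<dots> = (1 - t) * nrm x + t * nrm y"
    using assms t unfolding is_norm_def by simp
  finally show "nrm ((1 - t) *\<^sub>R x + t *\<^sub>R y) \<le> (1 - t) * nrm x + t * nrm y" .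
qed simp

lemma is_norm_continuous_on:
  fixes nrm :: "'a::euclidean_space \<Rightarrow> real"
  assumes "is_norm nrm"
  shows "continuous_on UNIV nrm"
  using convex_on_continuous[OF open_UNIV is_norm_convex_on[OF assms]] .

text \<open>The extreme values of \<open>nrm\<close> on the compact unit sphere give the constants.\<close>
lemma is_norm_equiv_norm:
  fixes nrm :: "'a::euclidean_space \<Rightarrow> real"
  assumes nrm: "is_norm nrm"
  obtains A B where "0 < A" "0 < B" "\<And>x. norm x \<le> A * nrm x" "\<And>x. nrm x \<le> B * norm x"
proof -
  have hom: "\<And>c x. nrm (c *\<^sub>R x) = \<bar>c\<bar> * nrm x" and pos: "\<And>x. 0 < nrm x \<longleftrightarrow> x \<noteq> 0"
    using nrm unfolding is_norm_def by (auto simp: less_le)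
  have cont: "continuous_on (sphere 0 1) nrm"
    using is_norm_continuous_on[OF nrm] continuous_on_subset by blast
  have ne: "sphere (0::'a) 1 \<noteq> {}"
    using SOME_Basis norm_Basis by (metis empty_iff mem_sphere_0)
  obtain a where a: "a \<in> sphere 0 1" "\<And>u. u \<in> sphere 0 1 \<Longrightarrow> nrm a \<le> nrm u"
    using continuous_attains_inf[OF compact_sphere ne cont] by blast
  obtain b where b: "b \<in> sphere 0 1" "\<And>u. u \<in> sphere 0 1 \<Longrightarrow> nrm u \<le> nrm b"
    using continuous_attains_sup[OF compact_sphere ne cont] by blast
  have "nrm a > 0" "nrm b > 0"
    using a(1) b(1) pos[of a] pos[of b] by auto
  moreover have "nrm a * norm x \<le> nrm x \<and> nrm x \<le> nrm b * norm x" for x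
  proof (cases "x = 0")
    case True
    then show ?thesis using hom[of 0 0] by simp
  next
    case False
    then have u: "x /\<^sub>R norm x \<in> sphere 0 1" and "nrm x = norm x * nrm (x /\<^sub>R norm x)"
      by (simp_all only: hom) (simp_all add: field_simps)
    then show ?thesis using a(2)[OF u] b(2)[OF u] by (simp add: mult.commute mult_left_mono)
  qed
  ultimately show ?thesis
    by (intro that[of "1 / nrm a" "nrm b"]) (auto simp: field_simps)
qed

lemma norm_roundoff_diff_le:
  fixes x :: "real^'n"
  assumes "0 < \<delta>"
  shows "norm (roundoff \<delta> x - x) \<le> real CARD('n) * \<delta> / 2"
proof -
  have "\<bar>(roundoff \<delta> x - x) $ j\<bar> \<le> \<delta> / 2" for j
  proof -
    define t where "t = x $ j / \<delta>"
    have "(roundoff \<delta> x - x) $ j = \<delta> * (of_int \<lfloor>t + 1/2\<rfloor> - t)"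
      using assms by (simp add: roundoff_def t_def right_diff_distrib)
    moreover have "\<bar>of_int \<lfloor>t + 1/2\<rfloor> - t\<bar> \<le> 1/2"
      using of_int_floor_le[of "t + 1/2"] real_of_int_floor_add_one_gt[of "t + 1/2"] by linarith
    ultimately show ?thesis
      using assms by (simp add: abs_mult)
  qed
  then have "(\<Sum>j\<in>UNIV. \<bar>(roundoff \<delta> x - x) $ j\<bar>) \<le> (\<Sum>j\<in>(UNIV::'n set). \<delta> / 2)"
    by (intro sum_mono)
  then show ?thesis
    using norm_le_l1_cart[of "roundoff \<delta> x - x"] by simp
qed

section \<open>The Markov operator of an IFS\<close>

definition markov_op :: "nat \<Rightarrow> (nat \<Rightarrow> 'a \<Rightarrow> 'a) \<Rightarrow> (nat \<Rightarrow> real) \<Rightarrow> ('a \<Rightarrow> real) \<Rightarrow> 'a \<Rightarrow> real" where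
  "markov_op N W p h x = (\<Sum>i<N. p i * h (W i x))"

locale prob_weights =
  fixes N :: nat and p :: "nat \<Rightarrow> real"
  assumes weight_nonneg: "i < N \<Longrightarrow> 0 \<le> p i"
    and sum_weights: "(\<Sum>i<N. p i) = 1"
begin

lemma markov_op_diff_le:
  assumes "\<And>i. i < N \<Longrightarrow> \<bar>a (W i x) - b (V i y)\<bar> \<le> c"
  shows "\<bar>markov_op N W p a x - markov_op N V p b y\<bar> \<le> c"
proof -
  have "\<bar>markov_op N W p a x - markov_op N V p b y\<bar> = \<bar>\<Sum>i<N. p i * (a (W i x) - b (V i y))\<bar>"
    unfolding markov_op_def by (simp add: sum_subtractf right_diff_distrib)
  also have "\<dots> \<le> (\<Sum>i<N. p i * c)"
    using assms weight_nonneg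
    by (intro order_trans[OF sum_abs sum_mono]) (simp add: abs_mult mult_left_mono)
  also have "\<dots> = c"
    using sum_weights by (simp flip: sum_distrib_right)
  finally show ?thesis .
qed

lemma markov_op_bounded:
  assumes "\<And>x. \<bar>h x\<bar> \<le> M"
  shows "\<bar>markov_op N W p h x\<bar> \<le> M"
  using markov_op_diff_le[where a=h and b="\<lambda>_. 0" and V=W and y=x] assms
  by (simp add: markov_op_def)

lemma markov_op_iter_bounded:
  assumes "\<And>x. \<bar>h x\<bar> \<le> M"
  shows "\<bar>(markov_op N W p ^^ k) h x\<bar> \<le> M"
  using assms by (induction k arbitrary: x) (auto intro: markov_op_bounded)

lemma markov_op_iter_lipschitz:
  assumes contr: "\<And>i x y. i < N \<Longrightarrow> d (W i x) (W i y) \<le> c * d x y"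
    and lip: "\<And>x y. \<bar>h x - h y\<bar> \<le> L * d x y" and "0 \<le> L" "0 \<le> c"
  shows "\<bar>(markov_op N W p ^^ k) h x - (markov_op N W p ^^ k) h y\<bar> \<le> L * c ^ k * d x y"
proof (induction k arbitrary: x y)
  case (Suc k)
  have "\<bar>(markov_op N W p ^^ k) h (W i x) - (markov_op N W p ^^ k) h (W i y)\<bar> \<le> L * c ^ Suc k * d x y"
    if "i < N" for i
  proof -
    have "L * c ^ k * d (W i x) (W i y) \<le> L * c ^ k * (c * d x y)"
      using contr[OF that] \<open>0 \<le> L\<close> \<open>0 \<le> c\<close> by (intro mult_left_mono) auto
    then show ?thesis
      using Suc[of "W i x" "W i y"] by (simp add: mult_ac)
  qed
  then show ?case
    by (simp add: markov_op_diff_le)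
qed (simp add: lip)

lemma markov_op_iter_perturb:
  assumes contr: "\<And>i x y. i < N \<Longrightarrow> d (W i x) (W i y) \<le> c * d x y"
    and close: "\<And>i x. i < N \<Longrightarrow> d (V i x) (W i x) \<le> e"
    and lip: "\<And>x y. \<bar>h x - h y\<bar> \<le> L * d x y" and "0 \<le> L" "0 \<le> c"
  shows "\<bar>(markov_op N V p ^^ k) h x - (markov_op N W p ^^ k) h x\<bar> \<le> L * e * (\<Sum>j<k. c ^ j)"
proof (induction k arbitrary: x)
  case (Suc k)
  have "\<bar>(markov_op N V p ^^ k) h (V i x) - (markov_op N W p ^^ k) h (W i x)\<bar> \<le> L * e * (\<Sum>j<Suc k. c ^ j)"
    if "i < N" for i
  proof -
    have "\<bar>(markov_op N W p ^^ k) h (V i x) - (markov_op N W p ^^ k) h (W i x)\<bar>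
        \<le> L * c ^ k * d (V i x) (W i x)"
      by (rule markov_op_iter_lipschitz[where d=d and W=W, OF contr lip \<open>0 \<le> L\<close> \<open>0 \<le> c\<close>])
    also have "\<dots> \<le> L * c ^ k * e"
      using close[OF that] \<open>0 \<le> L\<close> \<open>0 \<le> c\<close> by (intro mult_left_mono) auto
    finally have "\<bar>(markov_op N W p ^^ k) h (V i x) - (markov_op N W p ^^ k) h (W i x)\<bar> \<le> L * c ^ k * e" .
    then show ?thesis
      using Suc[of "V i x"] by (simp add: algebra_simps)
  qed
  then show ?case
    by (simp add: markov_op_diff_le)
qed simp

lemma markov_op_iter_perturb_le:
  assumes contr: "\<And>i x y. i < N \<Longrightarrow> d (W i x) (W i y) \<le> c * d x y" and "0 \<le> c" "c < 1"
    and close: "\<And>i x. i < N \<Longrightarrow> d (V i x) (W i x) \<le> e" and "0 \<le> e"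
    and lip: "\<And>x y. \<bar>h x - h y\<bar> \<le> L * d x y" and "0 \<le> L"
  shows "\<bar>(markov_op N V p ^^ k) h x - (markov_op N W p ^^ k) h x\<bar> \<le> L * e / (1 - c)"
proof -
  have "(\<Sum>j<k. c ^ j) \<le> 1 / (1 - c)"
    using sum_le_suminf[of "\<lambda>j. c ^ j" "{..<k}"] suminf_geometric[of c] summable_geometric[of c]
      \<open>0 \<le> c\<close> \<open>c < 1\<close> by simp
  then have "L * e * (\<Sum>j<k. c ^ j) \<le> L * e * (1 / (1 - c))"
    using \<open>0 \<le> e\<close> \<open>0 \<le> L\<close> by (intro mult_left_mono) auto
  then show ?thesis
    using markov_op_iter_perturb[where d=d and W=W and V=V and k=k and x=x, OF contr close lip \<open>0 \<le> L\<close> \<open>0 \<le> c\<close>] by simp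
qed

lemma measurable_markov_op_iter:
  assumes "\<And>i. i < N \<Longrightarrow> W i \<in> measurable M M" and "h \<in> borel_measurable M"
  shows "(markov_op N W p ^^ k) h \<in> borel_measurable M"
proof (induction k)
  case (Suc k)
  then show ?case
    using assms(1) unfolding funpow.simps comp_def markov_op_def
    by (intro borel_measurable_sum borel_measurable_times) (auto intro: measurable_compose)
qed (simp add: assms(2))

end

section \<open>Invariant measures\<close>

lemma expectation_bind_pmf:
  fixes f :: "'b \<Rightarrow> real"
  assumes "\<And>y. \<bar>f y\<bar> \<le> B"
  shows "measure_pmf.expectation (bind_pmf M K) f
    = measure_pmf.expectation M (\<lambda>x. measure_pmf.expectation (K x) f)"
  unfolding measure_pmf_bind
  by (rule integral_bind[where K="count_space UNIV" and B=B and B'=1])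
     (use assms in \<open>auto simp: space_subprob_algebra measure_pmf.subprob_space_axioms
        measure_pmf.emeasure_space_1 measure_pmf.finite_measure_axioms\<close>)

lemma expectation_eq_infsum:
  fixes f :: "'a \<Rightarrow> real"
  assumes "\<And>x. \<bar>f x\<bar> \<le> B"
  shows "measure_pmf.expectation P f = (\<Sum>\<^sub>\<infinity>x. pmf P x * f x)"
proof -
  have "(\<lambda>x. B * norm (pmf P x)) summable_on UNIV"
    using abs_summable_equivalent pmf_abs_summable summable_on_cmult_right by blast
  then have "(\<lambda>x. norm (pmf P x * f x)) summable_on UNIV"
    by (rule Infinite_Sum.abs_summable_on_comparison_test'[where f="\<lambda>x. pmf P x * f x"])
       (use assms in \<open>auto simp: abs_mult mult.commute intro!: mult_right_mono\<close>)
  then have "Infinite_Set_Sum.abs_summable_on (\<lambda>x. pmf P x * f x) UNIV"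
    using abs_summable_equivalent by blast
  then show ?thesis
    by (simp add: pmf_expectation_eq_infsetsum infsetsum_infsum)
qed

lemma trans_prob_eq_markov_op: "trans_prob N W p x y = markov_op N W p (\<lambda>z. if z = y then 1 else 0) x"
  unfolding trans_prob_def markov_op_def ..

definition markov_invariant :: "'a measure \<Rightarrow> nat \<Rightarrow> (nat \<Rightarrow> 'a \<Rightarrow> 'a) \<Rightarrow> (nat \<Rightarrow> real) \<Rightarrow> bool" where
  "markov_invariant M N W p \<longleftrightarrow> (\<forall>h B. h \<in> borel_measurable M \<longrightarrow> (\<forall>x. \<bar>h x\<bar> \<le> B) \<longrightarrow>
     integral\<^sup>L M (markov_op N W p h) = integral\<^sup>L M h)"

definition index_pmf :: "nat \<Rightarrow> (nat \<Rightarrow> real) \<Rightarrow> nat pmf" where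
  "index_pmf N p = embed_pmf (\<lambda>i. if i < N then p i else 0)"

definition transition_pmf :: "nat \<Rightarrow> (nat \<Rightarrow> 'a \<Rightarrow> 'a) \<Rightarrow> (nat \<Rightarrow> real) \<Rightarrow> 'a \<Rightarrow> 'a pmf" where
  "transition_pmf N W p x = map_pmf (\<lambda>i. W i x) (index_pmf N p)"

lemma has_sum_nonneg_infsetsum:
  fixes f :: "'a \<Rightarrow> real"
  assumes sum: "(f has_sum s) A" and nonneg: "\<And>x. x \<in> A \<Longrightarrow> 0 \<le> f x"
  shows "Infinite_Set_Sum.abs_summable_on f A" "infsetsum f A = s"
proof -
  have "(\<lambda>x. norm (f x)) summable_on A"
    using summable_on_cong[of A "\<lambda>x. norm (f x)" f] sum nonneg has_sum_imp_summable by auto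
  then show abs: "Infinite_Set_Sum.abs_summable_on f A"
    using abs_summable_equivalent by blast
  show "infsetsum f A = s"
    using infsetsum_infsum[OF abs] infsumI[OF sum] by simp
qed

lemma pmf_embed_pmf_stationary:
  assumes "stationary_on N W p C \<pi>"
  shows "pmf (embed_pmf \<pi>) x = \<pi> x"
proof (rule pmf_embed_pmf)
  have nonneg: "\<And>x. 0 \<le> \<pi> x" and zero: "\<And>x. x \<notin> C \<Longrightarrow> \<pi> x = 0" and "(\<pi> has_sum 1) C"
    using assms unfolding stationary_on_def by auto
  then have "(\<pi> has_sum 1) UNIV"
    by (subst has_sum_cong_neutral[where T=C]) auto
  then show "(\<integral>\<^sup>+x. ennreal (\<pi> x) \<partial>count_space UNIV) = 1"
    using nonneg has_sum_nonneg_infsetsum[of \<pi> UNIV 1] by (simp add: nn_integral_conv_infsetsum)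
  show "0 \<le> \<pi> x" for x
    by (rule nonneg)
qed

context prob_weights
begin

lemma pmf_index_pmf: "pmf (index_pmf N p) i = (if i < N then p i else 0)"
  unfolding index_pmf_def
proof (rule pmf_embed_pmf)
  have "(\<integral>\<^sup>+i. ennreal (if i < N then p i else 0) \<partial>count_space UNIV) = (\<Sum>i<N. ennreal (p i))"
    by (subst nn_integral_count_space'[of "{..<N}"]) auto
  also have "\<dots> = 1"
    using weight_nonneg sum_weights by (subst sum_ennreal) auto
  finally show "(\<integral>\<^sup>+i. ennreal (if i < N then p i else 0) \<partial>count_space UNIV) = 1" .
qed (simp add: weight_nonneg)

lemma expectation_index_pmf:
  "measure_pmf.expectation (index_pmf N p) f = (\<Sum>i<N. p i * f i)"
  by (subst integral_measure_pmf_real[of "{..<N}"]) (auto simp: pmf_index_pmf set_pmf_eq mult.commute split: if_splits)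

lemma expectation_transition_pmf:
  "measure_pmf.expectation (transition_pmf N W p x) h = markov_op N W p h x"
  by (simp add: transition_pmf_def markov_op_def expectation_index_pmf)

lemma pmf_transition_pmf: "pmf (transition_pmf N W p x) y = trans_prob N W p x y"
proof -
  have "(\<lambda>z. if z = y then 1 else 0) = (indicator {y} :: 'a \<Rightarrow> real)"
    by (auto simp: indicator_def)
  then show ?thesis
    by (simp add: trans_prob_eq_markov_op flip: expectation_transition_pmf) (simp add: pmf.rep_eq)
qed

lemma bind_transition_pmf_stationary:
  assumes st: "stationary_on N W p C \<pi>"
  shows "bind_pmf (embed_pmf \<pi>) (transition_pmf N W p) = embed_pmf \<pi>"
    (is "?Q = ?P")
proof -
  note pmf_P = pmf_embed_pmf_stationary[OF st]
  have zero: "\<And>x. x \<notin> C \<Longrightarrow> \<pi> x = 0" and "(\<pi> has_sum 1) C"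
    using st unfolding stationary_on_def by auto
  have pmf_Q: "pmf ?Q y = (\<Sum>\<^sub>\<infinity>x. \<pi> x * trans_prob N W p x y)" for y
  proof -
    have "\<bar>trans_prob N W p x y\<bar> \<le> 1" for x
      unfolding trans_prob_eq_markov_op by (rule markov_op_bounded) simp
    then have "measure_pmf.expectation ?P (\<lambda>x. trans_prob N W p x y)
        = (\<Sum>\<^sub>\<infinity>x. pmf ?P x * trans_prob N W p x y)"
      by (rule expectation_eq_infsum)
    then show ?thesis
      by (simp add: pmf_bind pmf_transition_pmf pmf_P)
  qed
  have on_C: "pmf ?Q y = \<pi> y" if "y \<in> C" for y
  proof -
    have "((\<lambda>x. \<pi> x * trans_prob N W p x y) has_sum \<pi> y) UNIV"
      using st that zero by (subst has_sum_cong_neutral[where T=C]) (auto simp: stationary_on_def)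
    then show ?thesis
      by (simp add: pmf_Q infsumI)
  qed
  have "measure_pmf.prob ?Q C = infsetsum \<pi> C"
    using on_C by (simp add: measure_pmf_conv_infsetsum cong: infsetsum_cong)
  also have "\<dots> = 1"
    using \<open>(\<pi> has_sum 1) C\<close> st has_sum_nonneg_infsetsum unfolding stationary_on_def by blast
  finally have prob_C: "measure_pmf.prob ?Q C = 1" .
  have off_C: "pmf ?Q y = 0" if "y \<notin> C" for y
  proof -
    have "pmf ?Q y \<le> measure_pmf.prob ?Q (UNIV - C)"
      unfolding pmf.rep_eq using that by (intro measure_pmf.finite_measure_mono) auto
    also have "\<dots> = 0"
      using measure_pmf.prob_compl[of C ?Q] prob_C by simp
    finally show ?thesis
      using pmf_nonneg[of ?Q y] by linarith
  qed
  show ?thesis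
  proof (rule pmf_eqI)
    fix y
    show "pmf ?Q y = pmf ?P y"
      by (cases "y \<in> C") (simp_all add: on_C off_C zero pmf_P)
  qed
qed

lemma markov_invariant_stationary:
  assumes "stationary_on N W p C \<pi>"
  shows "markov_invariant (measure_pmf (embed_pmf \<pi>)) N W p"
  unfolding markov_invariant_def
proof (intro allI impI)
  fix h :: "'a \<Rightarrow> real" and B
  assume "\<forall>x. \<bar>h x\<bar> \<le> B"
  then show "measure_pmf.expectation (embed_pmf \<pi>) (markov_op N W p h) = measure_pmf.expectation (embed_pmf \<pi>) h"
    using expectation_bind_pmf[of h B "embed_pmf \<pi>" "transition_pmf N W p"]
    by (simp add: bind_transition_pmf_stationary[OF assms] expectation_transition_pmf)
qed

text \<open>The invariance equation says that \<open>M\<close> is the mixture, with weights \<open>p i\<close>, of its images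
  under the maps \<open>W i\<close>, that is, a bind over \<open>index_pmf N p\<close>.\<close>
lemma markov_invariant_of_emeasure_eq:
  assumes M: "prob_space M" and W: "\<And>i. i < N \<Longrightarrow> W i \<in> measurable M M"
    and inv: "\<And>A. A \<in> sets M \<Longrightarrow> emeasure M A = (\<Sum>i<N. ennreal (p i) * emeasure M (W i -` A \<inter> space M))"
  shows "markov_invariant M N W p"
  unfolding markov_invariant_def
proof (intro allI impI)
  fix h :: "'a \<Rightarrow> real" and B
  assume h: "h \<in> borel_measurable M" and bound: "\<forall>x. \<bar>h x\<bar> \<le> B"
  interpret prob_space M by (rule M)
  \<comment> \<open>the maps \<open>W i\<close> with \<open>i \<ge> N\<close> need not be measurable; they carry no weight\<close>
  define K where "K i = (if i < N then distr M M (W i) else M)" for i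
  have K_prob: "prob_space (K i)" and sets_K: "sets (K i) = sets M" for i
    using M W by (auto simp: K_def intro: prob_space_distr)
  then have K: "K \<in> measurable (index_pmf N p) (subprob_algebra M)"
    by (simp add: space_subprob_algebra prob_space_imp_subprob_space)
  define mix where "mix = measure_pmf (index_pmf N p) \<bind> K"
  have mix: "M = mix"
    unfolding mix_def
  proof (rule measure_eqI)
    fix A assume A: "A \<in> sets M"
    have "emeasure (measure_pmf (index_pmf N p) \<bind> K) A = (\<integral>\<^sup>+i. emeasure (K i) A \<partial>index_pmf N p)"
      using K A by (intro emeasure_bind) auto
    also have "\<dots> = (\<Sum>i<N. ennreal (p i) * emeasure M (W i -` A \<inter> space M))"
      using A W by (subst nn_integral_measure_pmf_support[of "{..<N}"])
        (auto simp: set_pmf_eq pmf_index_pmf K_def emeasure_distr mult.commute intro!: sum.cong)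
    finally show "emeasure M A = emeasure (measure_pmf (index_pmf N p) \<bind> K) A"
      using inv[OF A] by simp
  qed (subst sets_bind[where N=M], auto simp: sets_K)
  have "integral\<^sup>L M h = measure_pmf.expectation (index_pmf N p) (\<lambda>i. integral\<^sup>L (K i) h)"
    unfolding mix mix_def
    by (rule integral_bind[where B=B and B'=1])
       (use K h bound in \<open>auto simp: prob_space.emeasure_space_1[OF K_prob]\<close>)
  also have "\<dots> = (\<Sum>i<N. p i * integral\<^sup>L M (\<lambda>x. h (W i x)))"
    using W h by (simp add: expectation_index_pmf K_def integral_distr)
  also have "\<dots> = integral\<^sup>L M (markov_op N W p h)"
  proof -
    have "integrable M (\<lambda>x. h (W i x))" if "i < N" for i
      using W[OF that] h bound by (intro integrable_const_bound[where B=B]) auto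
    then show ?thesis
      unfolding markov_op_def by (subst Bochner_Integration.integral_sum) auto
  qed
  finally show "integral\<^sup>L M (markov_op N W p h) = integral\<^sup>L M h"
    by (rule sym)
qed

end

section \<open>Perturbation of invariant measures\<close>

lemma (in prob_space) abs_integral_le_const:
  fixes f :: "'a \<Rightarrow> real"
  assumes "f \<in> borel_measurable M" and "\<And>x. \<bar>f x\<bar> \<le> c"
  shows "\<bar>integral\<^sup>L M f\<bar> \<le> c"
proof -
  have "integrable M f"
    using assms by (intro integrable_const_bound[where B=c]) auto
  have "integral\<^sup>L M f \<le> c" and "integral\<^sup>L M (\<lambda>x. - f x) \<le> c"
    using \<open>integrable M f\<close> assms(2) by (intro integral_le_const; force simp: abs_le_iff)+
  then show ?thesis
    by (simp add: abs_le_iff)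
qed

context prob_weights
begin

lemma integral_markov_op_iter:
  assumes inv: "markov_invariant M N W p" and W: "\<And>i. i < N \<Longrightarrow> W i \<in> measurable M M"
    and g: "g \<in> borel_measurable M" "\<And>x. \<bar>g x\<bar> \<le> B"
  shows "integral\<^sup>L M ((markov_op N W p ^^ k) g) = integral\<^sup>L M g"
proof (induction k)
  case (Suc k)
  have "integral\<^sup>L M (markov_op N W p ((markov_op N W p ^^ k) g)) = integral\<^sup>L M ((markov_op N W p ^^ k) g)"
    using inv measurable_markov_op_iter[where W=W, OF W g(1)] markov_op_iter_bounded[where h=g, OF g(2)]
    unfolding markov_invariant_def by blast
  then show ?case
    using Suc by simp
qed simp

text \<open>Whatever the probability measure, the iterates of the Markov operator on a Lipschitz function
  become asymptotically constant, since their Lipschitz constants decay like \<open>c ^ k\<close>.\<close>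
lemma integral_markov_op_iter_diff_tendsto:
  assumes M: "prob_space M" and W: "\<And>i. i < N \<Longrightarrow> W i \<in> measurable M M"
    and g: "g \<in> borel_measurable M" "\<And>x. \<bar>g x\<bar> \<le> B"
    and contr: "\<And>i x y. i < N \<Longrightarrow> d (W i x) (W i y) \<le> c * d x y" and "0 \<le> c" "c < 1"
    and lip: "\<And>x y. \<bar>g x - g y\<bar> \<le> L * d x y" and "0 \<le> L"
  shows "(\<lambda>k. integral\<^sup>L M ((markov_op N W p ^^ k) g) - (markov_op N W p ^^ k) g z) \<longlonglongrightarrow> 0"
proof -
  interpret prob_space M by (rule M)
  let ?u = "\<lambda>k. (markov_op N W p ^^ k) g"
  have meas: "?u k \<in> borel_measurable M" for k
    by (rule measurable_markov_op_iter[where W=W, OF W g(1)])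
  have bounded: "\<bar>?u k x\<bar> \<le> B" for k x
    by (rule markov_op_iter_bounded[where h=g, OF g(2)])
  have "(\<lambda>k. integral\<^sup>L M (\<lambda>x. ?u k x - ?u k z)) \<longlonglongrightarrow> integral\<^sup>L M (\<lambda>x. 0)"
  proof (rule integral_dominated_convergence[where w="\<lambda>_. 2 * B"])
    show "(\<lambda>x. ?u k x - ?u k z) \<in> borel_measurable M" for k
      using meas by simp
    show "AE x in M. norm (?u k x - ?u k z) \<le> 2 * B" for k
    proof (rule AE_I2)
      fix x
      show "norm (?u k x - ?u k z) \<le> 2 * B"
        using abs_triangle_ineq4[of "?u k x" "?u k z"] bounded[of k x] bounded[of k z] by simp
    qed
    show "AE x in M. (\<lambda>k. ?u k x - ?u k z) \<longlonglongrightarrow> 0"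
    proof (rule AE_I2, rule Lim_null_comparison)
      fix x
      show "\<forall>\<^sub>F k in sequentially. norm (?u k x - ?u k z) \<le> L * c ^ k * d x z"
        using markov_op_iter_lipschitz[where d=d and W=W, OF contr lip \<open>0 \<le> L\<close> \<open>0 \<le> c\<close>] by simp
      show "(\<lambda>k. L * c ^ k * d x z) \<longlonglongrightarrow> 0"
        using LIMSEQ_power_zero[of c] \<open>0 \<le> c\<close> \<open>c < 1\<close>
        by (auto intro!: tendsto_mult_left_zero tendsto_mult_right_zero)
    qed
    show "integrable M (\<lambda>_. 2 * B)"
      by (rule integrable_const)
    show "(\<lambda>x. 0) \<in> borel_measurable M"
      by simp
  qed
  moreover have "integral\<^sup>L M (\<lambda>x. ?u k x - ?u k z) = integral\<^sup>L M (?u k) - ?u k z" for k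
  proof -
    have "integrable M (?u k)"
      using meas bounded by (intro integrable_const_bound[where B=B]) auto
    then show ?thesis
      by (simp add: prob_space)
  qed
  ultimately show ?thesis
    by simp
qed

lemma markov_op_iter_tendsto_integral:
  assumes M: "prob_space M" and inv: "markov_invariant M N W p"
    and W: "\<And>i. i < N \<Longrightarrow> W i \<in> measurable M M"
    and g: "g \<in> borel_measurable M" "\<And>x. \<bar>g x\<bar> \<le> B"
    and contr: "\<And>i x y. i < N \<Longrightarrow> d (W i x) (W i y) \<le> c * d x y" and "0 \<le> c" "c < 1"
    and lip: "\<And>x y. \<bar>g x - g y\<bar> \<le> L * d x y" and "0 \<le> L"
  shows "(\<lambda>k. (markov_op N W p ^^ k) g z) \<longlonglongrightarrow> integral\<^sup>L M g"
proof -
  have "(\<lambda>k. integral\<^sup>L M ((markov_op N W p ^^ k) g) - (markov_op N W p ^^ k) g z) \<longlonglongrightarrow> 0"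
    using M W g contr \<open>0 \<le> c\<close> \<open>c < 1\<close> lip \<open>0 \<le> L\<close>
    by (rule integral_markov_op_iter_diff_tendsto)
  then have "(\<lambda>k. integral\<^sup>L M g - (markov_op N W p ^^ k) g z) \<longlonglongrightarrow> 0"
    by (simp only: integral_markov_op_iter[OF inv W g])
  from tendsto_diff[OF tendsto_const[of "integral\<^sup>L M g"] this] show ?thesis
    by simp
qed

lemma abs_integral_diff_markov_op_iter_le:
  fixes g :: "'a \<Rightarrow> real"
  assumes M: "prob_space M" and inv: "markov_invariant M N V p"
    and V: "\<And>i. i < N \<Longrightarrow> V i \<in> measurable M M" and W: "\<And>i. i < N \<Longrightarrow> W i \<in> measurable M M"
    and g: "g \<in> borel_measurable M" "\<And>x. \<bar>g x\<bar> \<le> B"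
    and contr: "\<And>i x y. i < N \<Longrightarrow> d (W i x) (W i y) \<le> c * d x y" and "0 \<le> c" "c < 1"
    and close: "\<And>i x. i < N \<Longrightarrow> d (V i x) (W i x) \<le> e" and "0 \<le> e"
    and lip: "\<And>x y. \<bar>g x - g y\<bar> \<le> L * d x y" and "0 \<le> L"
  shows "\<bar>integral\<^sup>L M g - integral\<^sup>L M ((markov_op N W p ^^ k) g)\<bar> \<le> L * e / (1 - c)"
proof -
  interpret prob_space M by (rule M)
  let ?v = "(markov_op N V p ^^ k) g" and ?u = "(markov_op N W p ^^ k) g"
  have meas: "?v \<in> borel_measurable M" "?u \<in> borel_measurable M"
    using measurable_markov_op_iter[where W=V, OF V g(1)] measurable_markov_op_iter[where W=W, OF W g(1)]
    by auto
  have "\<bar>?v x\<bar> \<le> B" "\<bar>?u x\<bar> \<le> B" for x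
    by (rule markov_op_iter_bounded[where h=g, OF g(2)])+
  then have int: "integrable M ?v" "integrable M ?u"
    using meas by (auto intro!: integrable_const_bound[where B=B])
  have "integral\<^sup>L M g - integral\<^sup>L M ?u = integral\<^sup>L M ?v - integral\<^sup>L M ?u"
    by (simp only: integral_markov_op_iter[OF inv V g])
  also have "\<dots> = integral\<^sup>L M (\<lambda>x. ?v x - ?u x)"
    using int by (rule Bochner_Integration.integral_diff[symmetric])
  also have "\<bar>\<dots>\<bar> \<le> L * e / (1 - c)"
  proof (rule abs_integral_le_const)
    show "(\<lambda>x. ?v x - ?u x) \<in> borel_measurable M"
      using meas by (rule borel_measurable_diff)
    show "\<bar>?v x - ?u x\<bar> \<le> L * e / (1 - c)" for x
      using contr \<open>0 \<le> c\<close> \<open>c < 1\<close> close \<open>0 \<le> e\<close> lip \<open>0 \<le> L\<close> by (rule markov_op_iter_perturb_le)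
  qed
  finally show ?thesis .
qed

text \<open>Both integrals are approached along the iterates \<open>(markov_op N W p ^^ k) g\<close>: those of \<open>M\<^sub>2\<close>
  converge to \<open>integral M\<^sub>2 g\<close> at every point, and their \<open>M\<^sub>1\<close>-integrals stay within the perturbation
  bound of \<open>integral M\<^sub>1 g\<close> while approaching their values at any point.\<close>
lemma abs_integral_diff_perturbed_le:
  fixes g :: "'a \<Rightarrow> real"
  assumes M1: "prob_space M1" and M2: "prob_space M2"
    and inv1: "markov_invariant M1 N V p" and inv2: "markov_invariant M2 N W p"
    and V1: "\<And>i. i < N \<Longrightarrow> V i \<in> measurable M1 M1" and W1: "\<And>i. i < N \<Longrightarrow> W i \<in> measurable M1 M1"
    and W2: "\<And>i. i < N \<Longrightarrow> W i \<in> measurable M2 M2"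
    and g1: "g \<in> borel_measurable M1" and g2: "g \<in> borel_measurable M2" and bound: "\<And>x. \<bar>g x\<bar> \<le> B"
    and contr: "\<And>i x y. i < N \<Longrightarrow> d (W i x) (W i y) \<le> c * d x y" and "0 \<le> c" "c < 1"
    and close: "\<And>i x. i < N \<Longrightarrow> d (V i x) (W i x) \<le> e" and "0 \<le> e"
    and lip: "\<And>x y. \<bar>g x - g y\<bar> \<le> L * d x y" and "0 \<le> L"
  shows "\<bar>integral\<^sup>L M1 g - integral\<^sup>L M2 g\<bar> \<le> L * e / (1 - c)"
proof -
  fix z
  let ?u = "\<lambda>k. (markov_op N W p ^^ k) g"
  have "(\<lambda>k. \<bar>integral\<^sup>L M1 (?u k) - ?u k z\<bar>) \<longlonglongrightarrow> 0"
    using M1 W1 g1 bound contr \<open>0 \<le> c\<close> \<open>c < 1\<close> lip \<open>0 \<le> L\<close>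
    by (intro tendsto_rabs_zero integral_markov_op_iter_diff_tendsto)
  moreover have "(\<lambda>k. \<bar>integral\<^sup>L M1 g - ?u k z\<bar>) \<longlonglongrightarrow> \<bar>integral\<^sup>L M1 g - integral\<^sup>L M2 g\<bar>"
    using M2 inv2 W2 g2 bound contr \<open>0 \<le> c\<close> \<open>c < 1\<close> lip \<open>0 \<le> L\<close>
    by (intro tendsto_rabs tendsto_diff tendsto_const markov_op_iter_tendsto_integral)
  ultimately have "(\<lambda>k. \<bar>integral\<^sup>L M1 g - ?u k z\<bar> - \<bar>integral\<^sup>L M1 (?u k) - ?u k z\<bar>)
      \<longlonglongrightarrow> \<bar>integral\<^sup>L M1 g - integral\<^sup>L M2 g\<bar> - 0"
    by (rule tendsto_diff[rotated])
  moreover have "\<bar>integral\<^sup>L M1 g - ?u k z\<bar> - \<bar>integral\<^sup>L M1 (?u k) - ?u k z\<bar> \<le> L * e / (1 - c)" for k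
    using abs_integral_diff_markov_op_iter_le[where d=d, OF M1 inv1 V1 W1 g1 bound contr \<open>0 \<le> c\<close> \<open>c < 1\<close>
        close \<open>0 \<le> e\<close> lip \<open>0 \<le> L\<close>, of k]
    by linarith
  ultimately have "\<bar>integral\<^sup>L M1 g - integral\<^sup>L M2 g\<bar> - 0 \<le> L * e / (1 - c)"
    by (intro LIMSEQ_le_const2) blast+
  then show ?thesis
    by simp
qed

end

section \<open>Approximation by Lipschitz functions\<close>

definition inf_conv :: "('a::metric_space \<Rightarrow> real) \<Rightarrow> nat \<Rightarrow> 'a \<Rightarrow> real" where
  "inf_conv f k x = (INF y. f y + real k * dist x y)"

context
  fixes f :: "'a::metric_space \<Rightarrow> real" and M :: real
  assumes bounded: "\<And>x. \<bar>f x\<bar> \<le> M"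
begin

private lemma inf_conv_bdd_below: "bdd_below (range (\<lambda>y. f y + real k * dist x y))"
proof (rule bdd_belowI)
  fix z assume "z \<in> range (\<lambda>y. f y + real k * dist x y)"
  then obtain y where "z = f y + real k * dist x y"
    by blast
  then show "- M \<le> z"
    using bounded[of y] by (simp add: abs_le_iff add_increasing2)
qed

lemma inf_conv_le: "inf_conv f k x \<le> f y + real k * dist x y"
  unfolding inf_conv_def by (rule cINF_lower[OF inf_conv_bdd_below]) simp

lemma inf_conv_ge: "(\<And>y. a \<le> f y + real k * dist x y) \<Longrightarrow> a \<le> inf_conv f k x"
  unfolding inf_conv_def by (rule cINF_greatest) auto

lemma inf_conv_le_self: "inf_conv f k x \<le> f x"
  using inf_conv_le[of k x x] by simp

lemma abs_inf_conv_le: "\<bar>inf_conv f k x\<bar> \<le> M"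
proof -
  have "- M \<le> f y + real k * dist x y" for y
    using bounded[of y] by (simp add: abs_le_iff add_increasing2)
  then have "- M \<le> inf_conv f k x"
    by (rule inf_conv_ge)
  then show ?thesis
    using inf_conv_le_self[of k x] bounded[of x] by (simp add: abs_le_iff)
qed

lemma lipschitz_on_inf_conv: "(real k)-lipschitz_on UNIV (inf_conv f k)"
proof (rule lipschitz_onI)
  have "inf_conv f k x \<le> inf_conv f k y + real k * dist x y" for x y
  proof -
    have "inf_conv f k x - real k * dist x y \<le> f z + real k * dist y z" for z
      using inf_conv_le[of k x z] dist_triangle[of x z y] mult_left_mono[of "dist x z" "dist x y + dist y z" "real k"]
      by (simp add: algebra_simps dist_commute)
    then show ?thesis
      using inf_conv_ge[of "inf_conv f k x - real k * dist x y" k y] by simp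
  qed
  then show "dist (inf_conv f k x) (inf_conv f k y) \<le> real k * dist x y" for x y
    by (smt (verit) dist_commute dist_real_def)
qed simp

text \<open>Where \<open>f\<close> is continuous, the Lipschitz minorants \<open>inf_conv f k\<close> increase to \<open>f\<close>:
  a point \<open>y\<close> far from \<open>x\<close> is penalised by \<open>k * dist x y > 2 * M\<close> for large \<open>k\<close>.\<close>
lemma inf_conv_tendsto:
  assumes "isCont f x"
  shows "(\<lambda>k. inf_conv f k x) \<longlonglongrightarrow> f x"
proof (rule LIMSEQ_I)
  fix r :: real assume "0 < r"
  then obtain d where "d > 0" and d: "\<And>y. dist y x < d \<Longrightarrow> dist (f y) (f x) < r / 2"
    using assms unfolding continuous_at_eps_delta by (meson half_gt_zero)
  obtain K :: nat where K: "2 * M / d < real K"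
    using reals_Archimedean2 by blast
  have "norm (inf_conv f k x - f x) < r" if "K \<le> k" for k
  proof -
    have "f x - r / 2 \<le> f y + real k * dist x y" for y
    proof (cases "dist y x < d")
      case True
      then have "f x - r / 2 < f y"
        using d[of y] unfolding dist_real_def by arith
      moreover have "0 \<le> real k * dist x y"
        by simp
      ultimately show ?thesis
        by linarith
    next
      case False
      have "2 * M \<le> real K * d"
        using K \<open>d > 0\<close> by (simp add: field_simps)
      also have "\<dots> \<le> real k * dist x y"
        using False that \<open>d > 0\<close> by (intro mult_mono) (auto simp: dist_commute)
      finally show ?thesis
        using bounded[of x] bounded[of y] \<open>0 < r\<close> by (simp add: abs_le_iff)
    qed
    then have "f x - r / 2 \<le> inf_conv f k x"
      by (rule inf_conv_ge)
    then show ?thesis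
      using inf_conv_le_self[of k x] \<open>0 < r\<close> by simp
  qed
  then show "\<exists>K. \<forall>k\<ge>K. norm (inf_conv f k x - f x) < r"
    by blast
qed

end

text \<open>Lower semicontinuity half of the portmanteau argument: \<open>f\<close> is approximated from below by
  the Lipschitz functions \<open>inf_conv f k\<close>, whose expectations converge by assumption.\<close>
lemma eventually_expectation_gt_of_lipschitz:
  fixes P :: "'b \<Rightarrow> 'a::metric_space pmf" and f :: "'a \<Rightarrow> real"
  assumes \<mu>: "prob_space \<mu>" "sets \<mu> = sets borel"
    and lip: "\<And>(g :: 'a \<Rightarrow> real) L. L-lipschitz_on UNIV g \<Longrightarrow> bounded (range g) \<Longrightarrow>
      ((\<lambda>\<delta>. measure_pmf.expectation (P \<delta>) g) \<longlongrightarrow> integral\<^sup>L \<mu> g) F"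
    and f: "continuous_on UNIV f" "\<And>x. \<bar>f x\<bar> \<le> M"
    and a: "a < integral\<^sup>L \<mu> f"
  shows "\<forall>\<^sub>F \<delta> in F. a < measure_pmf.expectation (P \<delta>) f"
proof -
  interpret prob_space \<mu> by (rule \<mu>(1))
  have meas: "h \<in> borel_measurable \<mu>" if "continuous_on UNIV h" for h :: "'a \<Rightarrow> real"
    using borel_measurable_continuous_onI[OF that] measurable_cong_sets[OF \<mu>(2) refl] by blast
  have cont: "continuous_on UNIV (inf_conv f k)" for k
    using lipschitz_on_inf_conv[of f M, OF f(2)] by (rule lipschitz_on_continuous_on)
  have "(\<lambda>k. integral\<^sup>L \<mu> (inf_conv f k)) \<longlonglongrightarrow> integral\<^sup>L \<mu> f"
  proof (rule integral_dominated_convergence[where w="\<lambda>_. M"])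
    show "AE x in \<mu>. (\<lambda>k. inf_conv f k x) \<longlonglongrightarrow> f x"
      using f(1) by (intro AE_I2 inf_conv_tendsto[OF f(2)]) (simp add: continuous_on_eq_continuous_at)
  qed (use meas[OF f(1)] meas[OF cont] abs_inf_conv_le[of f M, OF f(2)] in auto)
  then have "\<forall>\<^sub>F k in sequentially. (a + integral\<^sup>L \<mu> f) / 2 < integral\<^sup>L \<mu> (inf_conv f k)"
    using a by (intro order_tendstoD(1)) auto
  then obtain k where k: "(a + integral\<^sup>L \<mu> f) / 2 < integral\<^sup>L \<mu> (inf_conv f k)"
    using eventually_sequentially by auto
  have mono: "measure_pmf.expectation (P \<delta>) (inf_conv f k) \<le> measure_pmf.expectation (P \<delta>) f" for \<delta>
    using abs_inf_conv_le[of f M, OF f(2)] inf_conv_le_self[of f M, OF f(2)] f(2)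
    by (intro integral_mono measure_pmf.integrable_const_bound[where B=M]) auto
  have "bounded (range (inf_conv f k))"
    using abs_inf_conv_le[of f M, OF f(2)] by (auto simp: bounded_iff)
  then have "\<forall>\<^sub>F \<delta> in F. (a + integral\<^sup>L \<mu> f) / 2 < measure_pmf.expectation (P \<delta>) (inf_conv f k)"
    using k lip[OF lipschitz_on_inf_conv[of f M, OF f(2)]] order_tendstoD(1) by blast
  then show ?thesis
  proof (rule eventually_mono)
    fix \<delta>
    assume "(a + integral\<^sup>L \<mu> f) / 2 < measure_pmf.expectation (P \<delta>) (inf_conv f k)"
    moreover have "a < (a + integral\<^sup>L \<mu> f) / 2"
      using a by simp
    ultimately show "a < measure_pmf.expectation (P \<delta>) f"
      using mono[of \<delta>] by linarith
  qed
qed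

lemma tendsto_expectation_of_lipschitz:
  fixes P :: "'b \<Rightarrow> 'a::metric_space pmf" and f :: "'a \<Rightarrow> real"
  assumes \<mu>: "prob_space \<mu>" "sets \<mu> = sets borel"
    and lip: "\<And>(g :: 'a \<Rightarrow> real) L. L-lipschitz_on UNIV g \<Longrightarrow> bounded (range g) \<Longrightarrow>
      ((\<lambda>\<delta>. measure_pmf.expectation (P \<delta>) g) \<longlongrightarrow> integral\<^sup>L \<mu> g) F"
    and f: "continuous_on UNIV f" "bounded (range f)"
  shows "((\<lambda>\<delta>. measure_pmf.expectation (P \<delta>) f) \<longlongrightarrow> integral\<^sup>L \<mu> f) F"
proof (rule order_tendstoI)
  obtain M where M: "\<And>x. \<bar>f x\<bar> \<le> M"
    using f(2) by (auto simp: bounded_iff)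
  show "\<forall>\<^sub>F \<delta> in F. a < measure_pmf.expectation (P \<delta>) f" if "a < integral\<^sup>L \<mu> f" for a
    using \<mu> lip f(1) M that by (rule eventually_expectation_gt_of_lipschitz)
  show "\<forall>\<^sub>F \<delta> in F. measure_pmf.expectation (P \<delta>) f < a" if "integral\<^sup>L \<mu> f < a" for a
  proof -
    have "continuous_on UNIV (\<lambda>x. - f x)" "\<And>x. \<bar>- f x\<bar> \<le> M" "- a < integral\<^sup>L \<mu> (\<lambda>x. - f x)"
      using f(1) M that by (auto intro: continuous_on_minus)
    with \<mu> lip have "\<forall>\<^sub>F \<delta> in F. - a < measure_pmf.expectation (P \<delta>) (\<lambda>x. - f x)"
      by (rule eventually_expectation_gt_of_lipschitz)
    then show ?thesis
      by simp
  qed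
qed

section \<open>Rounded iterated function systems\<close>

lemma expectation_stationary_eq_infsum:
  fixes f :: "'a \<Rightarrow> real"
  assumes st: "stationary_on N W p C \<pi>" and "C \<subseteq> S" and "bounded (range f)"
  shows "measure_pmf.expectation (embed_pmf \<pi>) f = (\<Sum>\<^sub>\<infinity>x\<in>S. f x * \<pi> x)"
proof -
  obtain B where "\<And>x. \<bar>f x\<bar> \<le> B"
    using assms(3) by (auto simp: bounded_iff)
  then have "measure_pmf.expectation (embed_pmf \<pi>) f = (\<Sum>\<^sub>\<infinity>x. f x * \<pi> x)"
    by (simp add: expectation_eq_infsum[where B=B] pmf_embed_pmf_stationary[OF st] mult.commute)
  also have "\<dots> = (\<Sum>\<^sub>\<infinity>x\<in>S. f x * \<pi> x)"
    using st \<open>C \<subseteq> S\<close> by (intro infsum_cong_neutral) (auto simp: stationary_on_def)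
  finally show ?thesis .
qed

locale norm_contraction_ifs = prob_weights N p
  for N :: nat and p :: "nat \<Rightarrow> real" +
  fixes nrm :: "real^'n \<Rightarrow> real" and A B :: real and w :: "nat \<Rightarrow> real^'n \<Rightarrow> real^'n" and s :: real
    and \<mu> :: "(real^'n) measure"
  assumes norm_le_nrm: "\<And>x. norm x \<le> A * nrm x" and nrm_le_norm: "\<And>x. nrm x \<le> B * norm x"
    and norm_constants: "0 < A" "0 < B"
    and contraction: "\<And>i x y. i < N \<Longrightarrow> nrm (w i x - w i y) \<le> s * nrm (x - y)"
    and contraction_factor: "0 \<le> s" "s < 1"
    and prob_space_\<mu>: "prob_space \<mu>" and sets_\<mu>: "sets \<mu> = sets borel"
    and self_similar: "\<And>A. A \<in> sets borel \<Longrightarrow> emeasure \<mu> A = (\<Sum>i<N. ennreal (p i) * emeasure \<mu> (w i -` A))"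
begin

lemma borel_measurable_w:
  assumes "i < N"
  shows "w i \<in> borel_measurable borel"
proof -
  have "dist (w i x) (w i y) \<le> A * s * B * dist x y" for x y
  proof -
    have "dist (w i x) (w i y) \<le> A * nrm (w i x - w i y)"
      using norm_le_nrm by (simp add: dist_norm)
    also have "\<dots> \<le> A * (s * nrm (x - y))"
      using contraction[OF assms] norm_constants by (intro mult_left_mono) auto
    also have "\<dots> \<le> A * (s * (B * dist x y))"
      using norm_constants nrm_le_norm contraction_factor by (intro mult_left_mono) (auto simp: dist_norm)
    finally show ?thesis
      by (simp add: mult_ac)
  qed
  then have "(A * s * B)-lipschitz_on UNIV (w i)"
    using norm_constants contraction_factor by (intro lipschitz_onI) auto
  then show ?thesis
    by (intro borel_measurable_continuous_onI lipschitz_on_continuous_on)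
qed

lemma markov_invariant_\<mu>: "markov_invariant \<mu> N w p"
proof (rule markov_invariant_of_emeasure_eq[OF prob_space_\<mu>])
  have space: "space \<mu> = UNIV"
    using sets_eq_imp_space_eq[OF sets_\<mu>] by simp
  show "w i \<in> measurable \<mu> \<mu>" if "i < N" for i
    using borel_measurable_w[OF that] sets_\<mu> by (simp cong: measurable_cong_sets)
  show "emeasure \<mu> A = (\<Sum>i<N. ennreal (p i) * emeasure \<mu> (w i -` A \<inter> space \<mu>))" if "A \<in> sets \<mu>" for A
    using self_similar[of A] that by (simp add: space sets_\<mu>)
qed

text \<open>The rounded maps move every point by at most \<open>CARD('n) * \<delta> / 2\<close> in the Euclidean norm,
  hence by at most \<open>B\<close> times that in \<open>nrm\<close>, while \<open>g\<close> is \<open>L * A\<close>-Lipschitz for \<open>nrm\<close>.\<close>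
lemma abs_expectation_stationary_diff_le:
  fixes \<pi> :: "real^'n \<Rightarrow> real" and g :: "real^'n \<Rightarrow> real"
  assumes stationary: "stationary_on N (\<lambda>i x. roundoff \<delta> (w i x)) p C \<pi>" and "0 < \<delta>"
    and lip: "L-lipschitz_on UNIV g" and "bounded (range g)"
  shows "\<bar>measure_pmf.expectation (embed_pmf \<pi>) g - integral\<^sup>L \<mu> g\<bar>
    \<le> L * A * (B * (real CARD('n) * \<delta> / 2)) / (1 - s)"
proof -
  obtain M where M: "\<And>x. \<bar>g x\<bar> \<le> M"
    using \<open>bounded (range g)\<close> by (auto simp: bounded_iff)
  have "0 \<le> L"
    using lip by (rule lipschitz_on_nonneg)
  have g_meas: "g \<in> borel_measurable \<mu>"
    using borel_measurable_continuous_onI[OF lipschitz_on_continuous_on[OF lip]] sets_\<mu>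
    by (simp cong: measurable_cong_sets)
  have w_meas: "w i \<in> measurable \<mu> \<mu>" if "i < N" for i
    using borel_measurable_w[OF that] sets_\<mu> by (simp cong: measurable_cong_sets)
  have g_lip: "\<bar>g x - g y\<bar> \<le> L * A * nrm (x - y)" for x y
    using lipschitz_onD[OF lip, of x y] mult_left_mono[OF norm_le_nrm[of "x - y"] \<open>0 \<le> L\<close>]
    by (simp add: dist_norm mult.assoc dist_real_def)
  have close: "nrm (roundoff \<delta> (w i x) - w i x) \<le> B * (real CARD('n) * \<delta> / 2)" for i x
    using nrm_le_norm[of "roundoff \<delta> (w i x) - w i x"] norm_constants
      mult_left_mono[OF norm_roundoff_diff_le[OF \<open>0 < \<delta>\<close>, of "w i x"], of B]
    by linarith
  from stationary have "markov_invariant (embed_pmf \<pi>) N (\<lambda>i x. roundoff \<delta> (w i x)) p"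
    by (rule markov_invariant_stationary)
  with measure_pmf.prob_space_axioms prob_space_\<mu> show ?thesis
    using markov_invariant_\<mu> _ _ w_meas _ g_meas M contraction contraction_factor close _ g_lip
    by (rule abs_integral_diff_perturbed_le) (use \<open>0 \<le> L\<close> norm_constants \<open>0 < \<delta>\<close> in auto)
qed

lemma tendsto_expectation_stationary_lipschitz:
  fixes \<pi> :: "real \<Rightarrow> real^'n \<Rightarrow> real" and g :: "real^'n \<Rightarrow> real"
  assumes stationary: "\<And>\<delta>. 0 < \<delta> \<Longrightarrow> \<exists>C. stationary_on N (\<lambda>i x. roundoff \<delta> (w i x)) p C (\<pi> \<delta>)"
    and lip: "L-lipschitz_on UNIV g" and "bounded (range g)"
  shows "((\<lambda>\<delta>. measure_pmf.expectation (embed_pmf (\<pi> \<delta>)) g) \<longlongrightarrow> integral\<^sup>L \<mu> g) (at_right 0)"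
proof -
  have "\<bar>measure_pmf.expectation (embed_pmf (\<pi> \<delta>)) g - integral\<^sup>L \<mu> g\<bar>
      \<le> L * A * (B * (real CARD('n) * \<delta> / 2)) / (1 - s)" if "0 < \<delta>" for \<delta>
    using stationary[OF that] abs_expectation_stationary_diff_le that lip \<open>bounded (range g)\<close> by blast
  then have "\<forall>\<^sub>F \<delta> in at_right 0. norm (measure_pmf.expectation (embed_pmf (\<pi> \<delta>)) g - integral\<^sup>L \<mu> g)
      \<le> L * A * (B * (real CARD('n) * \<delta> / 2)) / (1 - s)"
    unfolding real_norm_def by (rule eventually_mono[OF eventually_at_right_less])
  moreover have "((\<lambda>\<delta>. L * A * (B * (real CARD('n) * \<delta> / 2)) / (1 - s)) \<longlongrightarrow> 0) (at_right 0)"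
    by (intro tendsto_divide_zero tendsto_mult_right_zero tendsto_ident_at)
  ultimately have "((\<lambda>\<delta>. measure_pmf.expectation (embed_pmf (\<pi> \<delta>)) g - integral\<^sup>L \<mu> g) \<longlongrightarrow> 0) (at_right 0)"
    by (rule Lim_null_comparison)
  then show ?thesis
    by (simp add: LIM_zero_iff)
qed

lemma tendsto_infsum_stationary:
  fixes \<pi> :: "real \<Rightarrow> real^'n \<Rightarrow> real" and f :: "real^'n \<Rightarrow> real"
  assumes stationary: "\<And>\<delta>. 0 < \<delta> \<Longrightarrow> \<exists>C\<subseteq>lattice \<delta>. stationary_on N (\<lambda>i x. roundoff \<delta> (w i x)) p C (\<pi> \<delta>)"
    and f: "continuous_on UNIV f" "bounded (range f)"
  shows "((\<lambda>\<delta>. \<Sum>\<^sub>\<infinity>x\<in>lattice \<delta>. f x * \<pi> \<delta> x) \<longlongrightarrow> integral\<^sup>L \<mu> f) (at_right 0)"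
proof -
  have stationary': "\<exists>C. stationary_on N (\<lambda>i x. roundoff \<delta> (w i x)) p C (\<pi> \<delta>)" if "0 < \<delta>" for \<delta>
    using stationary[OF that] by blast
  have "((\<lambda>\<delta>. measure_pmf.expectation (embed_pmf (\<pi> \<delta>)) f) \<longlongrightarrow> integral\<^sup>L \<mu> f) (at_right 0)"
  proof (rule tendsto_expectation_of_lipschitz[OF prob_space_\<mu> sets_\<mu> _ f])
    show "((\<lambda>\<delta>. measure_pmf.expectation (embed_pmf (\<pi> \<delta>)) g) \<longlongrightarrow> integral\<^sup>L \<mu> g) (at_right 0)"
      if "L-lipschitz_on UNIV g" and "bounded (range g)" for g :: "real^'n \<Rightarrow> real" and L
      using stationary' that by (rule tendsto_expectation_stationary_lipschitz)
  qed
  moreover have "\<forall>\<^sub>F \<delta> in at_right 0.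
      measure_pmf.expectation (embed_pmf (\<pi> \<delta>)) f = (\<Sum>\<^sub>\<infinity>x\<in>lattice \<delta>. f x * \<pi> \<delta> x)"
  proof (rule eventually_mono[OF eventually_at_right_less])
    fix \<delta> :: real
    assume "0 < \<delta>"
    then obtain C where "C \<subseteq> lattice \<delta>" and "stationary_on N (\<lambda>i x. roundoff \<delta> (w i x)) p C (\<pi> \<delta>)"
      using stationary by blast
    then show "measure_pmf.expectation (embed_pmf (\<pi> \<delta>)) f = (\<Sum>\<^sub>\<infinity>x\<in>lattice \<delta>. f x * \<pi> \<delta> x)"
      using f(2) by (intro expectation_stationary_eq_infsum)
  qed
  ultimately show ?thesis
    by (simp only: tendsto_cong)
qed

end

lemma uniform_contraction_constant:
  fixes N :: nat and d :: "'a \<Rightarrow> 'a \<Rightarrow> real"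
  assumes contr: "\<forall>i<N. \<exists>s<1. \<forall>x y. d (w i x) (w i y) \<le> s * d x y" and nonneg: "\<And>x y. 0 \<le> d x y"
  obtains s where "0 \<le> s" "s < 1" "\<And>i x y. i < N \<Longrightarrow> d (w i x) (w i y) \<le> s * d x y"
proof -
  obtain r where r: "\<And>i. i < N \<Longrightarrow> r i < 1 \<and> (\<forall>x y. d (w i x) (w i y) \<le> r i * d x y)"
    using contr by metis
  define s where "s = Max (insert 0 (r ` {..<N}))"
  have "r i \<le> s" if "i < N" for i
    unfolding s_def using that by (intro Max_ge) auto
  then have "d (w i x) (w i y) \<le> s * d x y" if "i < N" for i x y
    using r[OF that] nonneg[of x y] that by (meson mult_right_mono order_trans)
  moreover have "0 \<le> s" "s < 1"
    unfolding s_def using r by (auto simp: Max_less_iff)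
  ultimately show thesis
    using that by blast
qed

lemma Pi_family_stationary_on:
  assumes "\<pi> \<in> Pi_family S N W p"
  shows "\<exists>C\<subseteq>S. stationary_on N W p C \<pi>"
proof -
  obtain C where "pos_rec_class S N W p C" and "stationary_on N W p C \<pi>"
    using assms unfolding Pi_family_def by blast
  then show ?thesis
    unfolding pos_rec_class_def comm_class_def by blast
qed

theorem theorem15:
  fixes nrm :: "real^'n \<Rightarrow> real"
    and N :: nat
    and w :: "nat \<Rightarrow> real^'n \<Rightarrow> real^'n"
    and p :: "nat \<Rightarrow> real"
    and \<mu> :: "(real^'n) measure"
    and f :: "real^'n \<Rightarrow> real"
    and sel :: "real \<Rightarrow> real^'n \<Rightarrow> real"
  assumes norm: "is_norm nrm"
    and contr: "\<forall>i<N. \<exists>s<1. \<forall>x y. nrm (w i x - w i y) \<le> s * nrm (x - y)"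
    and prob: "\<forall>i<N. 0 < p i \<and> p i \<le> 1"
    and sum1: "(\<Sum>i<N. p i) = 1"
    and ps: "prob_space \<mu>"
    and sets_mu: "sets \<mu> = sets borel"
    and inv: "\<forall>A\<in>sets borel. emeasure \<mu> A = (\<Sum>i<N. ennreal (p i) * emeasure \<mu> (w i -` A))"
    and cont: "continuous_on UNIV f"
    and bdd: "bounded (range f)"
    and sel: "\<forall>\<delta>>0. sel \<delta> \<in> Pi_family (lattice \<delta>) N (\<lambda>i x. roundoff \<delta> (w i x)) p"
  shows "((\<lambda>\<delta>. \<Sum>\<^sub>\<infinity>x\<in>lattice \<delta>. f x * sel \<delta> x) \<longlongrightarrow> integral\<^sup>L \<mu> f) (at_right 0)"
proof -
  interpret prob_weights N p
    using prob sum1 by unfold_locales auto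
  obtain s where "0 \<le> s" "s < 1" and contraction: "\<And>i x y. i < N \<Longrightarrow> nrm (w i x - w i y) \<le> s * nrm (x - y)"
    using uniform_contraction_constant[of N "\<lambda>x y. nrm (x - y)" w] contr norm by (auto simp: is_norm_def)
  obtain A B where "0 < A" "0 < B" "\<And>x. norm x \<le> A * nrm x" "\<And>x. nrm x \<le> B * norm x"
    using is_norm_equiv_norm[OF norm] by blast
  then interpret norm_contraction_ifs N p nrm A B w s \<mu>
    using inv by (intro norm_contraction_ifs.intro norm_contraction_ifs_axioms.intro prob_weights_axioms
        contraction \<open>0 \<le> s\<close> \<open>s < 1\<close> ps sets_mu) blast+
  have "\<exists>C\<subseteq>lattice \<delta>. stationary_on N (\<lambda>i x. roundoff \<delta> (w i x)) p C (sel \<delta>)" if "0 < \<delta>" for \<delta>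
    using sel that by (intro Pi_family_stationary_on) auto
  then show ?thesis
    using cont bdd by (rule tendsto_infsum_stationary)
qed

end
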